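(* Let $\Sigma$ be a ranked alphabet, $B$ a strong bimonoid and $\mathcal{A}=(Q,\delta,F)$ a $(\Sigma,B)$-wta such that $\mathcal{N}(\mathcal{A})$ is finite. Let $U_{\mathcal{A}}$ be the set of all crisp-deterministic $(\Sigma,B)$-wta $\mathcal{B}$ such that for every $q\in Q$ there is a final variant $\mathcal{B}'$ of $\mathcal{B}$ with $h^q_{\mathrm{V}(\mathcal{A})}=[\![\mathcal{B}']\!]^{\mathrm{init}}$. Then $\mathrm{rel}(\mathcal{N}(\mathcal{A}))$ is minimal in $U_{\mathcal{A}}$ with respect to the number of states, i.e., $\mathrm{rel}(\mathcal{N}(\mathcal{A}))\in U_{\mathcal{A}}$ and no element of $U_{\mathcal{A}}$ has fewer states.
   Context: Ranked alphabet $\Sigma$ ($\Sigma^{(0)}\ne\emptyset$), trees $T_\Sigma$; strong bimonoid $(B,\oplus,\otimes,\mathbb{0},\mathbb{1})$ (commutative monoid $(B,\oplus,\mathbb{0})$, monoid $(B,\otimes,\mathbb{1})$, $\mathbb{0}\ne\mathbb{1}$, $\mathbb{0}$ absorbing, no distributivity). $(\Sigma,B)$-wta $\mathcal{A}=(Q,\delta,F)$: $Q$ finite nonempty (the states), $\delta_k:Q^k\times\Sigma^{(k)}\times Q\to B$, $F:Q\to B$. Vector algebra $\mathrm{V}(\mathcal{A})=(B^Q,\delta_{\mathcal{A}})$, $\delta_{\mathcal{A}}(\sigma)(v_1,\dots,v_k)_q=\bigoplus_{p_1,\dots,p_k}\big(\bigotimes_{i=1}^k(v_i)_{p_i}\big)\otimes\delta_k(p_1\dots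 p_k,\sigma,q)$; $h_{\mathrm{V}(\mathcal{A})}:T_\Sigma\to B^Q$ the unique homomorphism; $h^q_{\mathrm{V}(\mathcal{A})}(\xi)=h_{\mathrm{V}(\mathcal{A})}(\xi)_q$; $[\![\mathcal{A}]\!]^{\mathrm{init}}(\xi)=\bigoplus_q h_{\mathrm{V}(\mathcal{A})}(\xi)_q\otimes F_q$. Crisp-deterministic: for all $k,\sigma\in\Sigma^{(k)},q_1,\dots,q_k$ a unique $q$ with $\delta_k(q_1\dots q_k,\sigma,q)=\mathbb{1}$, all other values $\mathbb{0}$. A final variant of $(Q,\delta,F)$ is $(Q,\delta,F')$ with arbitrary $F':Q\to B$. Nerode algebra $\mathcal{N}(\mathcal{A})=(Q_{\mathcal{N}},\theta_{\mathcal{N}},F_{\mathcal{N}})$: smallest subalgebra of $\mathrm{V}(\mathcal{A})$ (carrier $\mathrm{im}(h_{\mathrm{V}(\mathcal{A})})$) with $(F_{\mathcal{N}})_v=\bigoplus_q v_q\otimes F_q$; finite if $Q_{\mathcal{N}}$ finite. For a finite $(\Sigma,B)$-algebra $(P,\theta,G)$, $\mathrm{rel}(P,\theta,G)$ is the crisp-deterministic wta $(P,\delta',G)$ with $\delta'_k(p_1\dots p_k,\sigma,p)=\mathbb{1}$ iff $\theta(\sigma)(p_1,\dots,p_k)=p$, else $\mathbb{0}$. *)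

theory Defs
  imports Main "HOL-Library.FuncSet"
begin

definition ranked_alphabet :: "('f \<Rightarrow> nat) \<Rightarrow> bool" where
  "ranked_alphabet rk \<longleftrightarrow> finite (UNIV :: 'f set) \<and> (\<exists>\<sigma>. rk \<sigma> = 0)"

datatype 'f tree = Node 'f "'f tree list"

fun wf_tree :: "('f \<Rightarrow> nat) \<Rightarrow> 'f tree \<Rightarrow> bool" where
  "wf_tree rk (Node \<sigma> ts) \<longleftrightarrow> length ts = rk \<sigma> \<and> (\<forall>t\<in>set ts. wf_tree rk t)"

definition trees :: "('f \<Rightarrow> nat) \<Rightarrow> 'f tree set" where
  "trees rk = {t. wf_tree rk t}"

record 'b bimonoid =
  bplus :: "'b \<Rightarrow> 'b \<Rightarrow> 'b"
  btimes :: "'b \<Rightarrow> 'b \<Rightarrow> 'b"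
  bzero :: 'b
  bone :: 'b

definition strong_bimonoid :: "'b bimonoid \<Rightarrow> bool" where
  "strong_bimonoid K \<longleftrightarrow>
     (\<forall>a b c. bplus K (bplus K a b) c = bplus K a (bplus K b c)) \<and>
     (\<forall>a b. bplus K a b = bplus K b a) \<and>
     (\<forall>a. bplus K (bzero K) a = a) \<and>
     (\<forall>a b c. btimes K (btimes K a b) c = btimes K a (btimes K b c)) \<and>
     (\<forall>a. btimes K (bone K) a = a \<and> btimes K a (bone K) = a) \<and>
     bzero K \<noteq> bone K \<and>
     (\<forall>a. btimes K (bzero K) a = bzero K \<and> btimes K a (bzero K) = bzero K)"

definition bsum :: "'b bimonoid \<Rightarrow> ('a \<Rightarrow> 'b) \<Rightarrow> 'a set \<Rightarrow> 'b" where
  "bsum K g S = Finite_Set.fold (\<lambda>x acc. bplus K (g x) acc) (bzero K) S"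

text \<open>Ordered product a_1 * ... * a_k (times is not commutative).\<close>
definition bprod :: "'b bimonoid \<Rightarrow> 'b list \<Rightarrow> 'b" where
  "bprod K xs = foldr (btimes K) xs (bone K)"

text \<open>A wta (Q, delta, F); delta ps sigma q is delta_k(p_1...p_k, sigma, q) where k = rk sigma = length ps.\<close>
record ('s, 'f, 'b) wta =
  states :: "'s set"
  delta :: "'s list \<Rightarrow> 'f \<Rightarrow> 's \<Rightarrow> 'b"
  fin :: "'s \<Rightarrow> 'b"

definition is_wta :: "('s, 'f, 'b) wta \<Rightarrow> bool" where
  "is_wta A \<longleftrightarrow> finite (states A) \<and> states A \<noteq> {}"

definition tuples :: "'s set \<Rightarrow> nat \<Rightarrow> 's list set" where
  "tuples Q k = {ps. length ps = k \<and> set ps \<subseteq> Q}"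

text \<open>The operation delta_A(sigma) of the vector algebra V(A) = (B^Q, delta_A);
  vectors in B^Q are functions 's => 'b restricted to Q (undefined outside Q).\<close>
definition vec_op :: "'b bimonoid \<Rightarrow> ('s, 'f, 'b) wta \<Rightarrow> 'f \<Rightarrow> ('s \<Rightarrow> 'b) list \<Rightarrow> ('s \<Rightarrow> 'b)" where
  "vec_op K A \<sigma> vs = restrict (\<lambda>q. bsum K (\<lambda>ps. btimes K (bprod K (map2 (\<lambda>v p. v p) vs ps))
                                                   (delta A ps \<sigma> q))
                                 (tuples (states A) (length vs))) (states A)"

fun hV :: "'b bimonoid \<Rightarrow> ('s, 'f, 'b) wta \<Rightarrow> 'f tree \<Rightarrow> ('s \<Rightarrow> 'b)" where
  "hV K A (Node \<sigma> ts) = vec_op K A \<sigma> (map (hV K A) ts)"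

definition run_init :: "'b bimonoid \<Rightarrow> ('s, 'f, 'b) wta \<Rightarrow> 'f tree \<Rightarrow> 'b" where
  "run_init K A t = bsum K (\<lambda>q. btimes K (hV K A t q) (fin A q)) (states A)"

definition crisp_det :: "'b bimonoid \<Rightarrow> ('f \<Rightarrow> nat) \<Rightarrow> ('s, 'f, 'b) wta \<Rightarrow> bool" where
  "crisp_det K rk B \<longleftrightarrow>
     (\<forall>\<sigma> ps. ps \<in> tuples (states B) (rk \<sigma>) \<longrightarrow>
        (\<exists>!q. q \<in> states B \<and> delta B ps \<sigma> q = bone K) \<and>
        (\<forall>q\<in>states B. delta B ps \<sigma> q \<noteq> bone K \<longrightarrow> delta B ps \<sigma> q = bzero K))"

definition final_variant :: "('s, 'f, 'b) wta \<Rightarrow> ('s \<Rightarrow> 'b) \<Rightarrow> ('s, 'f, 'b) wta" where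
  "final_variant B G = B\<lparr>fin := G\<rparr>"

record ('p, 'f, 'b) falg =
  carrier :: "'p set"
  op :: "'f \<Rightarrow> 'p list \<Rightarrow> 'p"
  final :: "'p \<Rightarrow> 'b"

definition nerode_alg :: "'b bimonoid \<Rightarrow> ('f \<Rightarrow> nat) \<Rightarrow> ('s, 'f, 'b) wta \<Rightarrow> ('s \<Rightarrow> 'b, 'f, 'b) falg" where
  "nerode_alg K rk A =
     \<lparr> carrier = hV K A ` trees rk,
       op = vec_op K A,
       final = (\<lambda>v. bsum K (\<lambda>q. btimes K (v q) (fin A q)) (states A)) \<rparr>"

definition rel :: "'b bimonoid \<Rightarrow> ('p, 'f, 'b) falg \<Rightarrow> ('p, 'f, 'b) wta" where
  "rel K P = \<lparr> states = carrier P,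
               delta = (\<lambda>ps \<sigma> p. if op P \<sigma> ps = p then bone K else bzero K),
               fin = final P \<rparr>"

definition U_A :: "'b bimonoid \<Rightarrow> ('f \<Rightarrow> nat) \<Rightarrow> ('s, 'f, 'b) wta \<Rightarrow> ('c, 'f, 'b) wta set" where
  "U_A K rk A = {B. is_wta B \<and> crisp_det K rk B \<and>
       (\<forall>q\<in>states A. \<exists>G. \<forall>t\<in>trees rk. hV K A t q = run_init K (final_variant B G) t)}"

end

theory Submission
  imports Defs
begin

text \<open>On each tree a crisp-deterministic wta reaches exactly one state, and its vector of
  run weights is the unit vector of that state; hence a final variant with final weights \<open>G\<close>
  assigns to the tree the weight \<open>G\<close> of the reached state. In \<open>rel(\<N>(\<A>))\<close> the state
  reached on \<open>\<xi>\<close> is the vector \<open>h(\<xi>)\<close> of \<open>V(\<A>)\<close> itself, so the final weights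
  \<open>v \<mapsto> v\<^sub>q\<close> recover \<open>h\<^sup>q\<close>. Conversely, for \<open>\<B> \<in> U\<^sub>\<A>\<close> every \<open>h\<^sup>q\<close> factors through
  the state reached by \<open>\<B>\<close>, hence so does \<open>h\<close>, and the Nerode carrier is the image of a
  set of states of \<open>\<B>\<close>.\<close>

lemma strong_bimonoid_simps:
  assumes "strong_bimonoid K"
  shows "bplus K (bzero K) a = a" "bplus K a (bzero K) = a"
    "btimes K (bone K) a = a" "btimes K a (bone K) = a"
    "btimes K (bzero K) a = bzero K" "btimes K a (bzero K) = bzero K"
    "bone K \<noteq> bzero K"
  using assms unfolding strong_bimonoid_def by metis+

lemma bsum_insert:
  assumes "strong_bimonoid K" and "finite S" and "x \<notin> S"
  shows "bsum K g (insert x S) = bplus K (g x) (bsum K g S)"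
proof -
  interpret comp_fun_commute_on "insert x S" "\<lambda>x acc. bplus K (g x) acc"
    using assms(1) unfolding comp_fun_commute_on_def strong_bimonoid_def
    by (auto simp: fun_eq_iff)
  show ?thesis
    unfolding bsum_def using assms(2,3) by (intro fold_insert) auto
qed

lemma bsum_eq_zero:
  assumes "strong_bimonoid K" and "finite S" and "\<forall>y\<in>S. g y = bzero K"
  shows "bsum K g S = bzero K"
  using assms(2,3)
  by (induction S rule: finite_induct)
    (simp_all add: bsum_def[of K g "{}"] bsum_insert strong_bimonoid_simps assms(1))

lemma bsum_eq_single:
  assumes "strong_bimonoid K" and "finite S" and "x \<in> S"
    and "\<forall>y\<in>S. y \<noteq> x \<longrightarrow> g y = bzero K"
  shows "bsum K g S = g x"
proof -
  have "S = insert x (S - {x})" using assms(3) by blast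
  then have "bsum K g S = bplus K (g x) (bsum K g (S - {x}))"
    using assms(1,2) by (metis bsum_insert finite_Diff Diff_iff singletonI)
  also have "bsum K g (S - {x}) = bzero K"
    using assms by (intro bsum_eq_zero) auto
  finally show ?thesis using assms(1) by (simp add: strong_bimonoid_simps)
qed

definition unit_vector :: "'b bimonoid \<Rightarrow> 's set \<Rightarrow> 's \<Rightarrow> 's \<Rightarrow> 'b" where
  "unit_vector K S r = restrict (\<lambda>q. if q = r then bone K else bzero K) S"

lemma bprod_unit_vectors:
  assumes "strong_bimonoid K" and "length rs = length ps" and "set ps \<subseteq> S"
  shows "bprod K (map2 (\<lambda>v p. v p) (map (unit_vector K S) rs) ps)
         = (if ps = rs then bone K else bzero K)"
  using assms(2,3)
  by (induction rs ps rule: list_induct2)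
    (auto simp: bprod_def unit_vector_def strong_bimonoid_simps assms(1))

lemma bsum_unit_vector_times:
  assumes "strong_bimonoid K" and "finite S" and "r \<in> S"
  shows "bsum K (\<lambda>q. btimes K (unit_vector K S r q) (G q)) S = G r"
  using bsum_eq_single[OF assms] assms(1,3)
  by (simp add: unit_vector_def strong_bimonoid_simps)

lemma finite_tuples: "finite S \<Longrightarrow> finite (tuples S k)"
  unfolding tuples_def using finite_lists_length_eq[of S k] by (simp add: conj_commute)

fun det_run :: "('f \<Rightarrow> 's list \<Rightarrow> 's) \<Rightarrow> 'f tree \<Rightarrow> 's" where
  "det_run d (Node \<sigma> ts) = d \<sigma> (map (det_run d) ts)"

definition transition_fun ::
    "'b bimonoid \<Rightarrow> ('f \<Rightarrow> nat) \<Rightarrow> ('s, 'f, 'b) wta \<Rightarrow> ('f \<Rightarrow> 's list \<Rightarrow> 's) \<Rightarrow> bool" where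
  "transition_fun K rk D d \<longleftrightarrow>
     (\<forall>\<sigma>. \<forall>ps\<in>tuples (states D) (rk \<sigma>).
        d \<sigma> ps \<in> states D \<and> (\<forall>q\<in>states D. delta D ps \<sigma> q = unit_vector K (states D) (d \<sigma> ps) q))"

lemma crisp_det_iff_transition_fun:
  assumes "strong_bimonoid K"
  shows "crisp_det K rk D \<longleftrightarrow> (\<exists>d. transition_fun K rk D d)"
proof
  assume cd: "crisp_det K rk D"
  define d where "d \<sigma> ps = (THE q. q \<in> states D \<and> delta D ps \<sigma> q = bone K)" for \<sigma> ps
  have "d \<sigma> ps \<in> states D \<and> (\<forall>q\<in>states D. delta D ps \<sigma> q = unit_vector K (states D) (d \<sigma> ps) q)"
    if "ps \<in> tuples (states D) (rk \<sigma>)" for \<sigma> ps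
  proof -
    have unique: "\<exists>!q. q \<in> states D \<and> delta D ps \<sigma> q = bone K"
      and others: "\<forall>q\<in>states D. delta D ps \<sigma> q \<noteq> bone K \<longrightarrow> delta D ps \<sigma> q = bzero K"
      using cd that unfolding crisp_det_def by auto
    have "d \<sigma> ps \<in> states D \<and> delta D ps \<sigma> (d \<sigma> ps) = bone K"
      unfolding d_def using theI'[OF unique] .
    with unique others show ?thesis by (auto simp: unit_vector_def)
  qed
  then show "\<exists>d. transition_fun K rk D d" unfolding transition_fun_def by blast
next
  assume "\<exists>d. transition_fun K rk D d"
  then obtain d where d: "transition_fun K rk D d" ..
  show "crisp_det K rk D"
    unfolding crisp_det_def
  proof (intro allI impI conjI)
    fix \<sigma> ps assume "ps \<in> tuples (states D) (rk \<sigma>)"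
    then have reached: "d \<sigma> ps \<in> states D"
      and step: "\<forall>q\<in>states D. delta D ps \<sigma> q = (if q = d \<sigma> ps then bone K else bzero K)"
      using d by (auto simp: transition_fun_def unit_vector_def)
    show "\<exists>!q. q \<in> states D \<and> delta D ps \<sigma> q = bone K"
      using reached step strong_bimonoid_simps(7)[OF assms]
      by (intro ex1I[of _ "d \<sigma> ps"]) (auto split: if_splits)
    show "\<forall>q\<in>states D. delta D ps \<sigma> q \<noteq> bone K \<longrightarrow> delta D ps \<sigma> q = bzero K"
      using step by auto
  qed
qed

lemma vec_op_unit_vectors:
  assumes "strong_bimonoid K" and "finite (states D)" and "transition_fun K rk D d"
    and rs: "rs \<in> tuples (states D) (rk \<sigma>)"
  shows "vec_op K D \<sigma> (map (unit_vector K (states D)) rs) = unit_vector K (states D) (d \<sigma> rs)"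
proof
  fix q
  have "bsum K (\<lambda>ps. btimes K (bprod K (map2 (\<lambda>v p. v p) (map (unit_vector K (states D)) rs) ps))
                                (delta D ps \<sigma> q)) (tuples (states D) (length rs))
        = btimes K (bone K) (delta D rs \<sigma> q)"
    using rs assms(1,2) finite_tuples
    by (subst bsum_eq_single[where x = rs])
      (auto simp: bprod_unit_vectors tuples_def strong_bimonoid_simps)
  then show "vec_op K D \<sigma> (map (unit_vector K (states D)) rs) q = unit_vector K (states D) (d \<sigma> rs) q"
    using assms(3) rs
    by (simp add: vec_op_def transition_fun_def strong_bimonoid_simps assms(1))
      (simp add: unit_vector_def)
qed

lemma hV_transition_fun:
  assumes "strong_bimonoid K" and "finite (states D)" and "transition_fun K rk D d"
  shows "t \<in> trees rk \<Longrightarrow> det_run d t \<in> states D \<and> hV K D t = unit_vector K (states D) (det_run d t)"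
proof (induction t)
  case (Node \<sigma> ts)
  let ?rs = "map (det_run d) ts"
  have rs: "?rs \<in> tuples (states D) (rk \<sigma>)"
    using Node unfolding trees_def tuples_def by auto
  have hV_ts: "map (hV K D) ts = map (unit_vector K (states D)) ?rs"
    using Node unfolding trees_def by auto
  have "hV K D (Node \<sigma> ts) = unit_vector K (states D) (d \<sigma> ?rs)"
    using vec_op_unit_vectors[OF assms rs] by (simp only: hV.simps hV_ts)
  moreover have "d \<sigma> ?rs \<in> states D"
    using assms(3) rs by (simp add: transition_fun_def)
  ultimately show ?case by simp
qed

lemma hV_final_variant: "hV K (final_variant D G) t = hV K D t"
proof (induction t)
  case (Node \<sigma> ts)
  then show ?case by (simp add: final_variant_def vec_op_def cong: map_cong)
qed

lemma run_init_final_variant_transition_fun: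
  assumes "strong_bimonoid K" and "finite (states D)" and "transition_fun K rk D d"
    and "t \<in> trees rk"
  shows "run_init K (final_variant D G) t = G (det_run d t)"
  using hV_transition_fun[OF assms] bsum_unit_vector_times[OF assms(1,2)]
  by (simp add: run_init_def hV_final_variant) (simp add: final_variant_def)

lemma det_run_vec_op: "det_run (vec_op K A) t = hV K A t"
  by (induction t) (simp cong: map_cong)

lemma hV_outside_states: "q \<notin> states A \<Longrightarrow> hV K A t q = undefined"
  by (cases t) (simp add: vec_op_def)

lemma nerode_op_closed:
  assumes "ps \<in> tuples (carrier (nerode_alg K rk A)) (rk \<sigma>)"
  shows "op (nerode_alg K rk A) \<sigma> ps \<in> carrier (nerode_alg K rk A)"
proof -
  have "ps \<in> lists (hV K A ` trees rk)" and len: "length ps = rk \<sigma>"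
    using assms by (auto simp: tuples_def nerode_alg_def)
  then obtain ts where ts: "ts \<in> lists (trees rk)" "ps = map (hV K A) ts"
    by (auto simp: lists_image)
  then have "hV K A (Node \<sigma> ts) \<in> hV K A ` trees rk"
    using len by (intro imageI) (auto simp: trees_def)
  moreover have "op (nerode_alg K rk A) \<sigma> ps = hV K A (Node \<sigma> ts)"
    using ts by (simp add: nerode_alg_def)
  ultimately show ?thesis by (simp only: nerode_alg_def falg.select_convs)
qed

lemma transition_fun_rel:
  assumes "\<forall>\<sigma>. \<forall>ps\<in>tuples (carrier P) (rk \<sigma>). op P \<sigma> ps \<in> carrier P"
  shows "transition_fun K rk (rel K P) (op P)"
  using assms by (auto simp: transition_fun_def rel_def unit_vector_def)

lemma rel_nerode_alg_in_U_A:
  assumes "ranked_alphabet rk" and "strong_bimonoid K" and "finite (carrier (nerode_alg K rk A))"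
  shows "rel K (nerode_alg K rk A) \<in> U_A K rk A"
proof -
  let ?R = "rel K (nerode_alg K rk A)"
  have "transition_fun K rk ?R (op (nerode_alg K rk A))"
    by (intro transition_fun_rel allI ballI nerode_op_closed)
  then have trans: "transition_fun K rk ?R (vec_op K A)"
    by (simp add: nerode_alg_def)
  have fin: "finite (states ?R)" using assms(3) by (simp add: rel_def)
  obtain \<sigma>\<^sub>0 where "rk \<sigma>\<^sub>0 = 0" using assms(1) unfolding ranked_alphabet_def by blast
  then have "Node \<sigma>\<^sub>0 [] \<in> trees rk" by (simp add: trees_def)
  then have "states ?R \<noteq> {}" by (auto simp: rel_def nerode_alg_def)
  moreover have "crisp_det K rk ?R"
    using trans crisp_det_iff_transition_fun[OF assms(2)] by blast
  moreover have "hV K A t q = run_init K (final_variant ?R (\<lambda>v. v q)) t" if "t \<in> trees rk" for t q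
    using run_init_final_variant_transition_fun[OF assms(2) fin trans that]
    by (simp add: det_run_vec_op)
  ultimately show ?thesis using fin unfolding U_A_def is_wta_def by blast
qed

lemma card_image_le_if_factors:
  assumes "finite (g ` A)" and "\<And>x y. x \<in> A \<Longrightarrow> y \<in> A \<Longrightarrow> g x = g y \<Longrightarrow> f x = f y"
  shows "card (f ` A) \<le> card (g ` A)"
proof -
  have "f ` A = (\<lambda>z. f (inv_into A g z)) ` g ` A"
    unfolding image_image
  proof (rule image_cong[OF refl])
    fix x assume x: "x \<in> A"
    then have "inv_into A g (g x) \<in> A" "g (inv_into A g (g x)) = g x"
      by (simp_all add: inv_into_into f_inv_into_f)
    with x assms(2) show "f x = f (inv_into A g (g x))" by metis
  qed
  then show ?thesis
    using card_image_le[OF assms(1), of "\<lambda>z. f (inv_into A g z)"] by (simp only:)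
qed

lemma card_nerode_alg_le:
  assumes "strong_bimonoid K" and "B \<in> U_A K rk A"
  shows "card (carrier (nerode_alg K rk A)) \<le> card (states B)"
proof -
  have finB: "finite (states B)" and cd: "crisp_det K rk B"
    and weights: "\<forall>q\<in>states A. \<exists>G. \<forall>t\<in>trees rk. hV K A t q = run_init K (final_variant B G) t"
    using assms(2) unfolding U_A_def is_wta_def by auto
  obtain d where d: "transition_fun K rk B d"
    using cd crisp_det_iff_transition_fun[OF assms(1)] by blast
  have reached: "det_run d ` trees rk \<subseteq> states B"
    using hV_transition_fun[OF assms(1) finB d] by blast
  have factors: "hV K A t = hV K A t'"
    if "t \<in> trees rk" "t' \<in> trees rk" "det_run d t = det_run d t'" for t t'
  proof
    fix q
    show "hV K A t q = hV K A t' q"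
    proof (cases "q \<in> states A")
      case True
      with weights obtain G where G: "\<forall>t\<in>trees rk. hV K A t q = run_init K (final_variant B G) t"
        by blast
      have "hV K A s q = G (det_run d s)" if "s \<in> trees rk" for s
        using G[rule_format, OF that] run_init_final_variant_transition_fun[OF assms(1) finB d that]
        by (rule trans)
      then show ?thesis using that by metis
    qed (simp add: hV_outside_states)
  qed
  have "card (hV K A ` trees rk) \<le> card (det_run d ` trees rk)"
    using finite_subset[OF reached finB] factors by (rule card_image_le_if_factors)
  also have "\<dots> \<le> card (states B)"
    using finB reached by (rule card_mono)
  finally show ?thesis by (simp add: nerode_alg_def)
qed

theorem theorem6p9:
  fixes rk :: "'f \<Rightarrow> nat" and K :: "'b bimonoid" and A :: "('s, 'f, 'b) wta"
  assumes "ranked_alphabet rk"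
    and "strong_bimonoid K"
    and "is_wta A"
    and "finite (carrier (nerode_alg K rk A))"
  shows "rel K (nerode_alg K rk A) \<in> U_A K rk A
         \<and> (\<forall>B \<in> (U_A K rk A :: ('c, 'f, 'b) wta set).
               card (states (rel K (nerode_alg K rk A))) \<le> card (states B))"
proof -
  have "card (states (rel K (nerode_alg K rk A))) \<le> card (states B)"
    if "B \<in> U_A K rk A" for B :: "('c, 'f, 'b) wta"
    using card_nerode_alg_le[OF assms(2) that] by (simp add: rel_def)
  then show ?thesis using rel_nerode_alg_in_U_A[OF assms(1,2,4)] by blast
qed

end
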